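(* Let $p_1,p_2\in\mathcal{P}_{KZ}$ be transcendental periods with $\deg(p_1)\neq\deg(p_2)$. Then $p_1/p_2$ is a transcendental number.
   Context: $\mathbb{R}_{\mathrm{alg}}=\mathbb{R}\cap\overline{\mathbb{Q}}$. Semialgebraic subsets of $\mathbb{R}^n$ are finite unions of finite intersections of sets $\{f=0\}$, $\{g>0\}$ with $f,g\in\mathbb{R}_{\mathrm{alg}}[T_1,\dots,T_n]$; $\mathcal{SA}^n$ denotes those with nonempty interior. A period is a real number $\int_X (P/Q)(x)\,dx$ (absolutely convergent) with $X\in\mathcal{SA}^n$, $P,Q\in\mathbb{R}_{\mathrm{alg}}[T_1,\dots,T_n]$, $Q$ not identically zero on $X$; $\mathcal{P}_{KZ}$ is the set of periods. For a nonzero period $p$ there exists a positive integer $k$ and a compact $K\in\mathcal{SA}^k$ with $|p|=\mathrm{vol}_k(K)$; $\deg(p)$ is the smallest such $k$, and $\deg(0)=0$. *)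

theory Defs
  imports "HOL-Analysis.Analysis" "HOL-Computational_Algebra.Polynomial"
begin

text \<open>Points of R^n are modelled as functions nat => real, extensional on {..<n}
  (i.e. elements of PiE {..<n} UNIV); Lebesgue measure on R^n is the product
  measure of n copies of lborel.\<close>

definition rspace :: "nat \<Rightarrow> (nat \<Rightarrow> real) set" where
  "rspace n = PiE {..<n} (\<lambda>_. UNIV)"

definition lebn :: "nat \<Rightarrow> (nat \<Rightarrow> real) measure" where
  "lebn n = Pi\<^sub>M {..<n} (\<lambda>_. lborel)"

inductive_set alg_poly :: "nat \<Rightarrow> ((nat \<Rightarrow> real) \<Rightarrow> real) set" for n :: nat where
  const: "algebraic c \<Longrightarrow> (\<lambda>_. c) \<in> alg_poly n"
| var: "i < n \<Longrightarrow> (\<lambda>x. x i) \<in> alg_poly n"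
| add: "f \<in> alg_poly n \<Longrightarrow> g \<in> alg_poly n \<Longrightarrow> (\<lambda>x. f x + g x) \<in> alg_poly n"
| mult: "f \<in> alg_poly n \<Longrightarrow> g \<in> alg_poly n \<Longrightarrow> (\<lambda>x. f x * g x) \<in> alg_poly n"

inductive_set semialg :: "nat \<Rightarrow> (nat \<Rightarrow> real) set set" for n :: nat where
  eq: "f \<in> alg_poly n \<Longrightarrow> {x \<in> rspace n. f x = 0} \<in> semialg n"
| pos: "g \<in> alg_poly n \<Longrightarrow> {x \<in> rspace n. g x > 0} \<in> semialg n"
| un: "A \<in> semialg n \<Longrightarrow> B \<in> semialg n \<Longrightarrow> A \<union> B \<in> semialg n"
| int: "A \<in> semialg n \<Longrightarrow> B \<in> semialg n \<Longrightarrow> A \<inter> B \<in> semialg n"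

definition nonempty_interior :: "nat \<Rightarrow> (nat \<Rightarrow> real) set \<Rightarrow> bool" where
  "nonempty_interior n X \<longleftrightarrow>
     (\<exists>x\<in>X. \<exists>e>0. {y \<in> rspace n. \<forall>i<n. \<bar>y i - x i\<bar> < e} \<subseteq> X)"

definition SA :: "nat \<Rightarrow> (nat \<Rightarrow> real) set set" where
  "SA n = {X \<in> semialg n. nonempty_interior n X}"

definition is_period :: "real \<Rightarrow> bool" where
  "is_period p \<longleftrightarrow>
     (\<exists>n X P Q. 0 < n \<and> X \<in> SA n \<and> P \<in> alg_poly n \<and> Q \<in> alg_poly n \<and>
        (\<exists>x\<in>X. Q x \<noteq> 0) \<and>
        set_integrable (lebn n) X (\<lambda>x. P x / Q x) \<and>
        p = (\<integral>x\<in>X. P x / Q x \<partial>lebn n))"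

definition period_deg :: "real \<Rightarrow> nat" where
  "period_deg p = (if p = 0 then 0 else
     (LEAST k. 0 < k \<and> (\<exists>K \<in> SA k. compact K \<and> \<bar>p\<bar> = measure (lebn k) K)))"

end

(* If p1 / p2 = a were algebraic, then p1 = a * p2. Stretching the first coordinate by |a| is a
   polynomial map with algebraic coefficients, as is its inverse, so it maps compact sets in SA^k
   onto compact sets in SA^k, multiplying their volume by |a|. Hence |p1| and |p2| are volumes of
   compact sets in SA^k for exactly the same k, and deg p1 = deg p2. *)

theory Submission
  imports Defs
begin

definition scale_coord0 :: "real \<Rightarrow> (nat \<Rightarrow> real) \<Rightarrow> nat \<Rightarrow> real" where
  "scale_coord0 c x = x(0 := c * x 0)"

lemma scale_coord0_inverse: "c \<noteq> 0 \<Longrightarrow> scale_coord0 (inverse c) (scale_coord0 c x) = x"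
  by (auto simp: scale_coord0_def fun_eq_iff)

lemma scale_coord0_rspace: "0 < k \<Longrightarrow> x \<in> rspace k \<Longrightarrow> scale_coord0 c x \<in> rspace k"
  by (auto simp: scale_coord0_def rspace_def PiE_def extensional_def)

lemma image_scale_coord0_eq_vimage:
  assumes "c \<noteq> 0" "0 < k" "K \<subseteq> rspace k"
  shows "scale_coord0 c ` K = {x \<in> rspace k. scale_coord0 (inverse c) x \<in> K}"
proof
  show "scale_coord0 c ` K \<subseteq> {x \<in> rspace k. scale_coord0 (inverse c) x \<in> K}"
    using assms by (auto simp: scale_coord0_inverse scale_coord0_rspace)
  show "{x \<in> rspace k. scale_coord0 (inverse c) x \<in> K} \<subseteq> scale_coord0 c ` K"
  proof
    fix x assume "x \<in> {x \<in> rspace k. scale_coord0 (inverse c) x \<in> K}"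
    moreover have "x = scale_coord0 c (scale_coord0 (inverse c) x)"
      using scale_coord0_inverse[of "inverse c" x] assms(1) by simp
    ultimately show "x \<in> scale_coord0 c ` K" by blast
  qed
qed

lemma continuous_on_scale_coord0: "continuous_on S (scale_coord0 c)"
proof (rule continuous_on_coordinatewise_then_product)
  fix i
  have "continuous_on S (\<lambda>x. x i)" "continuous_on S (\<lambda>x. x 0)"
    by (auto intro: continuous_on_subset[OF continuous_on_product_coordinates])
  then show "continuous_on S (\<lambda>x. scale_coord0 c x i)"
    by (cases "i = 0") (auto simp: scale_coord0_def intro: continuous_intros)
qed

lemma alg_poly_comp_scale_coord0:
  assumes "f \<in> alg_poly k" "algebraic c"
  shows "(\<lambda>x. f (scale_coord0 c x)) \<in> alg_poly k"
  using assms(1)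
proof induction
  case (var i)
  show ?case
  proof (cases "i = 0")
    case True
    have "(\<lambda>x. c * x 0) \<in> alg_poly k"
      using var assms(2) by (intro alg_poly.mult alg_poly.const alg_poly.var) auto
    then show ?thesis using True by (simp add: scale_coord0_def)
  qed (use var in \<open>simp_all add: scale_coord0_def alg_poly.var\<close>)
qed (simp_all add: alg_poly.intros)

lemma semialg_vimage_scale_coord0:
  assumes "A \<in> semialg k" "algebraic c" "0 < k"
  shows "{x \<in> rspace k. scale_coord0 c x \<in> A} \<in> semialg k"
  using assms(1)
proof induction
  case (eq f)
  have "{x \<in> rspace k. scale_coord0 c x \<in> {x \<in> rspace k. f x = 0}}
      = {x \<in> rspace k. f (scale_coord0 c x) = 0}"
    using scale_coord0_rspace[OF assms(3)] by auto
  then show ?case using semialg.eq[OF alg_poly_comp_scale_coord0[OF eq assms(2)]] by simp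
next
  case (pos g)
  have "{x \<in> rspace k. scale_coord0 c x \<in> {x \<in> rspace k. g x > 0}}
      = {x \<in> rspace k. g (scale_coord0 c x) > 0}"
    using scale_coord0_rspace[OF assms(3)] by auto
  then show ?case using semialg.pos[OF alg_poly_comp_scale_coord0[OF pos assms(2)]] by simp
next
  case (un A B)
  have "{x \<in> rspace k. scale_coord0 c x \<in> A \<union> B}
      = {x \<in> rspace k. scale_coord0 c x \<in> A} \<union> {x \<in> rspace k. scale_coord0 c x \<in> B}" by auto
  then show ?case using semialg.un[OF un(3,4)] by simp
next
  case (int A B)
  have "{x \<in> rspace k. scale_coord0 c x \<in> A \<inter> B}
      = {x \<in> rspace k. scale_coord0 c x \<in> A} \<inter> {x \<in> rspace k. scale_coord0 c x \<in> B}" by auto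
  then show ?case using semialg.int[OF int(3,4)] by simp
qed

lemma semialg_subset_rspace: "A \<in> semialg k \<Longrightarrow> A \<subseteq> rspace k"
  by (induction rule: semialg.induct) auto

lemma nonempty_interior_image_scale_coord0:
  assumes "nonempty_interior k K" "c > 0" "0 < k"
  shows "nonempty_interior k (scale_coord0 c ` K)"
proof -
  from assms(1) obtain x e where "x \<in> K" "e > 0"
    and box: "{y \<in> rspace k. \<forall>i<k. \<bar>y i - x i\<bar> < e} \<subseteq> K"
    by (auto simp: nonempty_interior_def)
  define e' where "e' = e * min 1 c"
  have "e' > 0" "e' \<le> e" "e' \<le> c * e"
    using \<open>e > 0\<close> assms(2) by (auto simp: e'_def mult_le_cancel_left1 mult_left_le)
  have "{y \<in> rspace k. \<forall>i<k. \<bar>y i - scale_coord0 c x i\<bar> < e'} \<subseteq> scale_coord0 c ` K"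
  proof
    fix y assume y: "y \<in> {y \<in> rspace k. \<forall>i<k. \<bar>y i - scale_coord0 c x i\<bar> < e'}"
    let ?z = "scale_coord0 (inverse c) y"
    have "\<bar>?z i - x i\<bar> < e" if "i < k" for i
    proof (cases "i = 0")
      case True
      have "\<bar>y 0 - c * x 0\<bar> < c * e"
        using y that True \<open>e' \<le> c * e\<close> by (force simp: scale_coord0_def)
      moreover have "\<bar>y 0 - c * x 0\<bar> = c * \<bar>?z 0 - x 0\<bar>"
      proof -
        have "y 0 - c * x 0 = c * (?z 0 - x 0)"
          using assms(2) by (simp add: scale_coord0_def algebra_simps)
        then show ?thesis using assms(2) by (simp add: abs_mult)
      qed
      ultimately show ?thesis using True assms(2) by simp
    qed (use y that \<open>e' \<le> e\<close> in \<open>force simp: scale_coord0_def\<close>)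
    moreover have "?z \<in> rspace k" using y assms(3) scale_coord0_rspace by auto
    ultimately have "?z \<in> K" using box by auto
    then show "y \<in> scale_coord0 c ` K"
      using assms(2) scale_coord0_inverse[of "inverse c" y] by (auto intro!: image_eqI)
  qed
  then show ?thesis
    using \<open>x \<in> K\<close> \<open>e' > 0\<close> unfolding nonempty_interior_def by blast
qed

lemma SA_image_scale_coord0:
  assumes "K \<in> SA k" "algebraic c" "c > 0" "0 < k"
  shows "scale_coord0 c ` K \<in> SA k"
proof -
  have K: "K \<in> semialg k" "nonempty_interior k K" using assms(1) by (auto simp: SA_def)
  have "scale_coord0 c ` K = {x \<in> rspace k. scale_coord0 (inverse c) x \<in> K}"
    using assms(3,4) semialg_subset_rspace[OF K(1)] by (simp add: image_scale_coord0_eq_vimage)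
  also have "\<dots> \<in> semialg k"
    using K(1) algebraic_inverse[OF assms(2)] assms(4) by (rule semialg_vimage_scale_coord0)
  finally show ?thesis
    using nonempty_interior_image_scale_coord0[OF K(2) assms(3,4)] by (simp add: SA_def)
qed

lemma space_lebn: "space (lebn k) = rspace k"
  by (simp add: lebn_def rspace_def space_PiM)

lemma alg_poly_measurable: "f \<in> alg_poly k \<Longrightarrow> f \<in> borel_measurable (lebn k)"
  unfolding lebn_def
proof (induction rule: alg_poly.induct)
  case (var i)
  then have "i \<in> {..<k}" by simp
  then show ?case by measurable
qed auto

lemma semialg_sets_lebn: "A \<in> semialg k \<Longrightarrow> A \<in> sets (lebn k)"
proof (induction rule: semialg.induct)
  case (eq f)
  have "{x \<in> space (lebn k). f x = 0} \<in> sets (lebn k)"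
    using alg_poly_measurable[OF eq] by measurable
  then show ?case by (simp add: space_lebn)
next
  case (pos f)
  have "{x \<in> space (lebn k). f x > 0} \<in> sets (lebn k)"
    using alg_poly_measurable[OF pos] by measurable
  then show ?case by (simp add: space_lebn)
qed auto

lemma emeasure_lborel_vimage_mult:
  assumes "(c::real) > 0" "B \<in> sets borel"
  shows "emeasure lborel ((*) c -` B) = ennreal (inverse c) * emeasure lborel B"
proof -
  have "emeasure lborel ((*) c -` B) = emeasure (distr lborel borel ((*) c)) B"
    using assms(2) by (simp add: emeasure_distr)
  also have "\<dots> = ennreal (inverse c) * emeasure lborel B"
    using assms by (simp add: lborel_distr_mult emeasure_density_const)
  finally show ?thesis .
qed

lemma measurable_scale_coord0: "0 < k \<Longrightarrow> scale_coord0 c \<in> measurable (lebn k) (lebn k)"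
proof -
  assume "0 < k"
  have "(\<lambda>x i. if i = 0 then c * x 0 else x i) \<in> measurable (lebn k) (lebn k)"
    unfolding lebn_def
    by (rule measurable_PiM_single') (use \<open>0 < k\<close> in \<open>auto simp: space_PiM PiE_def extensional_def\<close>)
  moreover have "(\<lambda>x i. if i = 0 then c * x 0 else x i) = scale_coord0 c"
    by (auto simp: scale_coord0_def fun_eq_iff)
  ultimately show ?thesis by simp
qed

lemma lebn_eq_scale_distr_scale_coord0:
  assumes "c > 0" "0 < k"
  shows "lebn k = scale_measure (ennreal c) (distr (lebn k) (lebn k) (scale_coord0 c))"
  unfolding lebn_def
proof (rule sym, rule product_sigma_finite.PiM_eqI)
  show "product_sigma_finite (\<lambda>_::nat. lborel :: real measure)"
    by (simp add: product_sigma_finite_def sigma_finite_lborel)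
  then interpret product_sigma_finite "\<lambda>_::nat. lborel :: real measure" .
  fix A :: "nat \<Rightarrow> real set" assume A: "\<And>i. i \<in> {..<k} \<Longrightarrow> A i \<in> sets lborel"
  define A' where "A' = A(0 := (*) c -` A 0)"
  have A'_sets: "A' i \<in> sets lborel" if "i \<in> {..<k}" for i
  proof (cases "i = 0")
    case True
    have "(*) c -` A 0 \<in> sets borel"
      by (rule measurable_sets_borel[of "(*) c"]) (use A[of 0] assms(2) in auto)
    then show ?thesis using True by (simp add: A'_def)
  qed (use A that in \<open>simp add: A'_def\<close>)
  have vimage: "scale_coord0 c -` PiE {..<k} A \<inter> space (PiM {..<k} (\<lambda>_. lborel)) = PiE {..<k} A'"
    using assms by (auto simp: scale_coord0_def A'_def space_PiM PiE_def extensional_def Pi_def split: if_splits)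
  have split0: "(\<Prod>i<k. f i) = f 0 * (\<Prod>i\<in>{..<k} - {0}. f i)" for f :: "nat \<Rightarrow> ennreal"
    using assms(2) by (subst prod.remove[of _ 0]) auto
  have "emeasure (distr (PiM {..<k} (\<lambda>_. lborel)) (PiM {..<k} (\<lambda>_. lborel)) (scale_coord0 c)) (PiE {..<k} A)
      = (\<Prod>i<k. emeasure lborel (A' i))"
    using measurable_scale_coord0[OF assms(2)] A A'_sets
    by (subst emeasure_distr) (auto simp: lebn_def vimage intro!: emeasure_PiM)
  also have "\<dots> = ennreal (inverse c) * (\<Prod>i<k. emeasure lborel (A i))"
    using A assms by (simp add: split0 A'_def emeasure_lborel_vimage_mult mult.assoc)
  finally show "emeasure (scale_measure (ennreal c) (distr (PiM {..<k} (\<lambda>_. lborel)) (PiM {..<k} (\<lambda>_. lborel)) (scale_coord0 c))) (PiE {..<k} A)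
      = (\<Prod>i<k. emeasure lborel (A i))"
    using assms(1) by (simp add: mult.assoc[symmetric] ennreal_mult[symmetric])
qed simp_all

lemma emeasure_image_scale_coord0:
  assumes "c > 0" "0 < k" "K \<in> sets (lebn k)"
  shows "emeasure (lebn k) (scale_coord0 c ` K) = ennreal c * emeasure (lebn k) K"
proof -
  have "K \<subseteq> rspace k" using sets.sets_into_space[OF assms(3)] by (simp add: space_lebn)
  then have "scale_coord0 c ` K = scale_coord0 (inverse c) -` K \<inter> space (lebn k)"
    using assms by (auto simp: image_scale_coord0_eq_vimage space_lebn)
  also have "emeasure (lebn k) \<dots> = emeasure (distr (lebn k) (lebn k) (scale_coord0 (inverse c))) K"
    using measurable_scale_coord0[OF assms(2)] assms(3) by (simp add: emeasure_distr)
  also have "\<dots> = ennreal c * emeasure (lebn k) K"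
  proof -
    have "emeasure (lebn k) K
        = ennreal (inverse c) * emeasure (distr (lebn k) (lebn k) (scale_coord0 (inverse c))) K"
      using lebn_eq_scale_distr_scale_coord0[of "inverse c" k] assms(1,2)
      by (metis emeasure_scale_measure inverse_positive_iff_positive)
    moreover have "ennreal c * ennreal (inverse c) = 1"
      using assms(1) by (simp add: ennreal_mult[symmetric])
    ultimately show ?thesis by (simp add: mult.assoc[symmetric])
  qed
  finally show ?thesis .
qed

definition compact_SA_volume :: "nat \<Rightarrow> real \<Rightarrow> bool" where
  "compact_SA_volume k p \<longleftrightarrow> 0 < k \<and> (\<exists>K \<in> SA k. compact K \<and> \<bar>p\<bar> = measure (lebn k) K)"

lemma period_deg_eq_Least: "p \<noteq> 0 \<Longrightarrow> period_deg p = (LEAST k. compact_SA_volume k p)"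
  by (simp add: period_deg_def compact_SA_volume_def)

lemma compact_SA_volume_mult_algebraic:
  assumes "compact_SA_volume k p" "algebraic a" "a \<noteq> 0"
  shows "compact_SA_volume k (a * p)"
proof -
  from assms(1) obtain K where k: "0 < k" and K: "K \<in> SA k" "compact K" "\<bar>p\<bar> = measure (lebn k) K"
    by (auto simp: compact_SA_volume_def)
  have c: "\<bar>a\<bar> > 0" "algebraic \<bar>a\<bar>" using assms(2,3) by auto
  have "scale_coord0 \<bar>a\<bar> ` K \<in> SA k"
    using SA_image_scale_coord0[OF K(1) c(2,1) k] .
  moreover have "compact (scale_coord0 \<bar>a\<bar> ` K)"
    using K(2) by (intro compact_continuous_image continuous_on_scale_coord0)
  moreover have "measure (lebn k) (scale_coord0 \<bar>a\<bar> ` K) = \<bar>a * p\<bar>"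
  proof -
    have "K \<in> sets (lebn k)" using K(1) by (simp add: SA_def semialg_sets_lebn)
    then have "measure (lebn k) (scale_coord0 \<bar>a\<bar> ` K) = \<bar>a\<bar> * measure (lebn k) K"
      using c(1) k by (simp add: measure_def emeasure_image_scale_coord0 enn2real_mult)
    then show ?thesis using K(3) by (simp add: abs_mult)
  qed
  ultimately show ?thesis using k unfolding compact_SA_volume_def by metis
qed

lemma period_deg_mult_algebraic:
  assumes "algebraic a" "a \<noteq> 0"
  shows "period_deg (a * p) = period_deg p"
proof (cases "p = 0")
  case False
  have "compact_SA_volume k (a * p) \<longleftrightarrow> compact_SA_volume k p" for k
  proof
    show "compact_SA_volume k p" if "compact_SA_volume k (a * p)"
      using compact_SA_volume_mult_algebraic[OF that algebraic_inverse[OF assms(1)]] assms(2)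
      by (simp add: mult.assoc[symmetric])
  qed (use compact_SA_volume_mult_algebraic assms in blast)
  then show ?thesis using False assms(2) by (simp add: period_deg_eq_Least)
qed simp

theorem mainTheorem9:
  fixes p1 p2 :: real
  assumes "is_period p1" and "is_period p2"
    and "\<not> algebraic p1" and "\<not> algebraic p2"
    and "period_deg p1 \<noteq> period_deg p2"
  shows "\<not> algebraic (p1 / p2)"
proof
  assume "algebraic (p1 / p2)"
  have "p1 \<noteq> 0" "p2 \<noteq> 0" using assms(3,4) by auto
  then have "period_deg p1 = period_deg ((p1 / p2) * p2)" by simp
  also have "\<dots> = period_deg p2"
    using \<open>algebraic (p1 / p2)\<close> \<open>p1 \<noteq> 0\<close> \<open>p2 \<noteq> 0\<close> by (intro period_deg_mult_algebraic) auto
  finally show False using assms(5) by contradiction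
qed

end
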